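(* Consider a Gibbs-type feature model with parameters $\alpha<1$, $\theta>-\alpha$ and weights $(V_{n,k})$. Let $\mathbf Z^{(n)}$ be a sample of $n$ individuals with $K_n=k$ observed features $X_1,\dots,X_k$ of frequencies $m_1,\dots,m_k$. Let $Y_{n+1}$ be the number of features displayed by individual $n+1$ that are not among $X_1,\dots,X_k$, and let $A_{n+1,\ell}\in\{0,1\}$ indicate whether individual $n+1$ displays $X_\ell$. Then, for all $y\in\mathbb N_0$ and $(a_1,\dots,a_k)\in\{0,1\}^k$, $$P\big((Y_{n+1},A_{n+1,1},\dots,A_{n+1,k})=(y,a_1,\dots,a_k)\mid \mathbf Z^{(n)}\big)=\binom{k+y}{k}\frac{V_{n+1,k+y}}{V_{n,k}}\{(\theta+\alpha)_n\}^y(\theta+n)^k\prod_{\ell=1}^k\mathscr B\Big(a_\ell;\frac{m_\ell-\alpha}{\theta+n}\Big),$$ where $\mathscr B(a;p)=p^a(1-p)^{1-a}$.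
   Context: Notation: $(x)_m=\Gamma(x+m)/\Gamma(x)$ (Pochhammer symbol); $[n]=\{1,\dots,n\}$. Individuals $i=1,2,\dots$ each display a finite (possibly empty) set of features, identified by almost surely distinct labels. For the sample $\mathbf Z^{(n)}=(Z_1,\dots,Z_n)$ of the first $n$ individuals, $K_n$ is the number of distinct features displayed, labelled $X_1,\dots,X_{K_n}$ in order of appearance; $A_{i,\ell}\in\{0,1\}$ indicates whether individual $i$ displays $X_\ell$, and $m_\ell=\sum_{i=1}^nA_{i,\ell}\in[n]$. The ordered feature allocation is $F_n=(B_{n,1},\dots,B_{n,K_n})$, $B_{n,\ell}=\{i\in[n]:A_{i,\ell}=1\}$. The model admits an exchangeable feature probability function (EFPF) if there are symmetric functions $\pi_n:\bigcup_{k\ge0}[n]^k\to[0,1]$ with $P(F_n=f_n)=\pi_n(m_1,\dots,m_k)$ for every ordered feature allocation $f_n$ of $[n]$ (a sequence of $k$ nonempty subsets of $[n]$ with sizes $m_1,\dots,m_k$), all orderings of the same collection of sets being equally likely; the laws for different $n$ are consistent (the law for $n$ individuals is the marginal of that for $n+1$). The model is a Gibbs-type feature model with parameters $\alpha<1$, $\theta>-\alpha$ if $\pi_n(m_1,\dots,m_k)=V_{n,k}\prod_{\ell=1}^k(1-\alpha)_{m_\ell-1}(\theta+\alpha)_{n-m_\ell}$ for nonnegative weights $(V_{n,k})_{n\ge1,k\ge0}$ satisfying $V_{n,k}=\sum_{j\ge0}\frac{(k+j)!}{j!\,k!}\{(\theta+\alpha)_n\}^j(\theta+n)^kV_{n+1,k+j}$.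 *)

theory Defs
  imports "HOL-Probability.Probability"
begin

text \<open>An ordered feature allocation of the individuals 1..n: a list of nonempty
  subsets of {1..n} (the features, in order).\<close>
definition ofa :: "nat \<Rightarrow> nat set list \<Rightarrow> bool" where
  "ofa n f \<longleftrightarrow> (\<forall>B \<in> set f. B \<noteq> {} \<and> B \<subseteq> {1..n})"

definition restr :: "nat \<Rightarrow> nat set list \<Rightarrow> nat set list" where
  "restr n g = filter (\<lambda>B. B \<noteq> {}) (map (\<lambda>B. B \<inter> {1..n}) g)"

definition gibbs_efpf :: "real \<Rightarrow> real \<Rightarrow> (nat \<Rightarrow> nat \<Rightarrow> real) \<Rightarrow> nat \<Rightarrow> nat list \<Rightarrow> real" where
  "gibbs_efpf \<alpha> \<theta> V n ms =
     V n (length ms) * (\<Prod>m\<leftarrow>ms. pochhammer (1 - \<alpha>) (m - 1) * pochhammer (\<theta> + \<alpha>) (n - m))"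

definition gibbs_weights :: "real \<Rightarrow> real \<Rightarrow> (nat \<Rightarrow> nat \<Rightarrow> real) \<Rightarrow> bool" where
  "gibbs_weights \<alpha> \<theta> V \<longleftrightarrow>
     (\<forall>n k. 0 \<le> V n k) \<and>
     (\<forall>n\<ge>1. \<forall>k. (\<lambda>j. real ((k + j) choose k) * (pochhammer (\<theta> + \<alpha>) n) ^ j
                      * (\<theta> + real n) ^ k * V (Suc n) (k + j)) sums V n k)"

definition gibbs_feature_model ::
  "real \<Rightarrow> real \<Rightarrow> (nat \<Rightarrow> nat \<Rightarrow> real) \<Rightarrow> (nat \<Rightarrow> nat set list pmf) \<Rightarrow> bool" where
  "gibbs_feature_model \<alpha> \<theta> V P \<longleftrightarrow>
     \<alpha> < 1 \<and> \<theta> > - \<alpha> \<and> gibbs_weights \<alpha> \<theta> V \<and>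
     (\<forall>n\<ge>1. set_pmf (P n) \<subseteq> {f. ofa n f}) \<and>
     (\<forall>n\<ge>1. \<forall>f. ofa n f \<longrightarrow> pmf (P n) f = gibbs_efpf \<alpha> \<theta> V n (map card f)) \<and>
     (\<forall>n\<ge>1. map_pmf (restr n) (P (Suc n)) = P n)"

definition new_feats :: "nat \<Rightarrow> nat set list \<Rightarrow> nat" where
  "new_feats n g = length (filter (\<lambda>B. B = {Suc n}) g)"

text \<open>Indicator that individual n+1 displays the l-th old feature X_(l+1) (0-based l).\<close>
definition old_ind :: "nat \<Rightarrow> nat set list \<Rightarrow> nat \<Rightarrow> nat" where
  "old_ind n g l = (if Suc n \<in> filter (\<lambda>B. B \<inter> {1..n} \<noteq> {}) g ! l then 1 else 0)"

definition bern :: "nat \<Rightarrow> real \<Rightarrow> real" where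
  "bern a p = p ^ a * (1 - p) ^ (1 - a)"

end

theory Submission
  imports Defs
begin

text \<open>Given \<open>F\<^sub>n = f\<close>, an allocation of the first \<open>n + 1\<close> individuals in the conditioning
  event is determined by which old features individual \<open>n + 1\<close> joins (the vector \<open>a\<close>) and
  by where its \<open>y\<close> new features, each the singleton \<open>{n + 1}\<close>, are interleaved among the
  old ones; there are \<open>(k + y choose k)\<close> interleavings. Since the EFPF depends only on the
  multiset of feature sizes, all of them have the same probability, and its ratio to the
  EFPF of \<open>f\<close> factorizes feature by feature: each new feature contributes \<open>(\<theta> + \<alpha>)\<^sub>n\<close>,
  and an old feature of size \<open>m\<close> contributes \<open>m - \<alpha>\<close> if joined and \<open>\<theta> + \<alpha> + n - m\<close> if
  not, which sum to \<open>\<theta> + n\<close>. The conditioning event has probability \<open>P(F\<^sub>n = f)\<close> by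
  consistency.\<close>

definition extend_feature :: "nat \<Rightarrow> nat set \<Rightarrow> nat \<Rightarrow> nat set" where
  "extend_feature N B c = (if c = 1 then insert N B else B)"

lemma card_extend_feature:
  "finite B \<Longrightarrow> N \<notin> B \<Longrightarrow> c \<in> {0, 1} \<Longrightarrow> card (extend_feature N B c) = card B + c"
  by (auto simp: extend_feature_def)

lemma extend_feature_eq_iff:
  assumes "B \<subseteq> insert N C" "A \<subseteq> C" "N \<notin> C" "c \<in> {0, 1}"
  shows "B = extend_feature N A c \<longleftrightarrow> B \<inter> C = A \<and> (if N \<in> B then 1 else 0) = c"
  using assms by (auto simp: extend_feature_def)

lemma map2_extend_feature_eq_iff:
  assumes "\<forall>B\<in>set bs. B \<subseteq> insert N C" "\<forall>A\<in>set as. A \<subseteq> C" "N \<notin> C"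
    and "length cs = length as" "set cs \<subseteq> {0, 1}"
  shows "bs = map2 (extend_feature N) as cs \<longleftrightarrow>
    map (\<lambda>B. B \<inter> C) bs = as \<and> (\<forall>l<length as. (if N \<in> bs ! l then 1 else 0) = cs ! l)"
proof -
  have nth_iff: "bs ! l = extend_feature N (as ! l) (cs ! l) \<longleftrightarrow>
      bs ! l \<inter> C = as ! l \<and> (if N \<in> bs ! l then 1 else 0) = cs ! l"
    if "l < length as" "length bs = length as" for l
  proof (rule extend_feature_eq_iff)
    have "bs ! l \<in> set bs" "as ! l \<in> set as" "cs ! l \<in> set cs"
      using that assms(4) by simp_all
    then show "bs ! l \<subseteq> insert N C" "as ! l \<subseteq> C" "N \<notin> C" "cs ! l \<in> {0, 1}"
      using assms by blast+
  qed
  have "bs = map2 (extend_feature N) as cs \<longleftrightarrow>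
      length bs = length as \<and> (\<forall>l<length as. bs ! l = extend_feature N (as ! l) (cs ! l))"
    using assms(4) by (auto simp: list_eq_iff_nth_eq)
  moreover have "map (\<lambda>B. B \<inter> C) bs = as \<longleftrightarrow>
      length bs = length as \<and> (\<forall>l<length as. bs ! l \<inter> C = as ! l)"
    by (auto simp: list_eq_iff_nth_eq)
  ultimately show ?thesis
    using nth_iff by blast
qed

lemma filter_shuffles_separated:
  assumes "zs \<in> shuffles xs ys" "\<forall>x\<in>set xs. P x" "\<forall>y\<in>set ys. \<not> P y"
  shows "filter P zs = xs" "filter (\<lambda>z. \<not> P z) zs = ys"
proof -
  have "filter P zs \<in> shuffles (filter P xs) (filter P ys)"
    "filter (\<lambda>z. \<not> P z) zs \<in> shuffles (filter (\<lambda>z. \<not> P z) xs) (filter (\<lambda>z. \<not> P z) ys)"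
    using assms(1) filter_shuffles by blast+
  moreover have "filter P xs = xs" "filter P ys = []"
    "filter (\<lambda>z. \<not> P z) xs = []" "filter (\<lambda>z. \<not> P z) ys = ys"
    using assms(2,3) by (auto simp: filter_empty_conv)
  ultimately show "filter P zs = xs" "filter (\<lambda>z. \<not> P z) zs = ys"
    by simp_all
qed

lemma restr_eq_map_filter:
  "restr n g = map (\<lambda>B. B \<inter> {1..n}) (filter (\<lambda>B. B \<inter> {1..n} \<noteq> {}) g)"
  by (simp add: restr_def filter_map comp_def)

lemma feature_disjoint_from_past_iff:
  assumes "B \<subseteq> {1..Suc n}" "B \<noteq> {}"
  shows "B \<inter> {1..n} = {} \<longleftrightarrow> B = {Suc n}"
proof
  assume disj: "B \<inter> {1..n} = {}"
  have "{1..Suc n} = insert (Suc n) {1..n}"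
    by auto
  with assms(1) disj have "B \<subseteq> {Suc n}"
    by blast
  with assms(2) show "B = {Suc n}"
    by blast
qed simp

lemma filter_new_features:
  assumes "ofa (Suc n) g"
  shows "filter (\<lambda>B. B \<inter> {1..n} = {}) g = replicate (new_feats n g) {Suc n}"
proof -
  have "B \<inter> {1..n} = {} \<longleftrightarrow> B = {Suc n}" if "B \<in> set g" for B
  proof -
    have "B \<subseteq> {1..Suc n}" "B \<noteq> {}"
      using assms that by (auto simp: ofa_def)
    then show ?thesis
      by (rule feature_disjoint_from_past_iff)
  qed
  then have "filter (\<lambda>B. B \<inter> {1..n} = {}) g = filter (\<lambda>B. B = {Suc n}) g"
    by (rule filter_cong[OF refl])
  also have "\<dots> = replicate (new_feats n g) {Suc n}"
    unfolding new_feats_def by (induction g) auto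
  finally show ?thesis .
qed

text \<open>The allocations of individuals \<open>1..n+1\<close> that restrict to \<open>f\<close>, in which \<open>n + 1\<close> has
  \<open>y\<close> new features and joins the \<open>l\<close>-th old feature iff \<open>a ! l = 1\<close>; order matters, so the
  new singleton features may sit anywhere among the old ones.\<close>
definition extensions :: "nat \<Rightarrow> nat set list \<Rightarrow> nat \<Rightarrow> nat list \<Rightarrow> nat set list set" where
  "extensions n f y a = shuffles (replicate y {Suc n}) (map2 (extend_feature (Suc n)) f a)"

lemma extended_feature_bounds:
  assumes "ofa n f" "B \<in> set (map2 (extend_feature (Suc n)) f a)"
  shows "B \<inter> {1..n} \<noteq> {}" "B \<subseteq> {1..Suc n}"
proof -
  obtain A c where Ac: "(A, c) \<in> set (zip f a)" and B: "B = extend_feature (Suc n) A c"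
    using assms(2) by auto
  from Ac have "A \<in> set f"
    by (rule set_zip_leftD)
  with assms(1) have "A \<noteq> {}" "A \<subseteq> {1..n}"
    by (auto simp: ofa_def)
  then show "B \<inter> {1..n} \<noteq> {}" "B \<subseteq> {1..Suc n}"
    unfolding B extend_feature_def by auto
qed

lemma ofa_extensions:
  assumes "ofa n f" "g \<in> extensions n f y a"
  shows "ofa (Suc n) g"
proof -
  have set_g: "set g = set (replicate y {Suc n}) \<union> set (map2 (extend_feature (Suc n)) f a)"
    using assms(2) unfolding extensions_def by (rule set_shuffles)
  have "B \<noteq> {} \<and> B \<subseteq> {1..Suc n}" if "B \<in> set g" for B
  proof -
    have "B = {Suc n} \<or> B \<in> set (map2 (extend_feature (Suc n)) f a)"
      using that set_g by (metis Un_iff in_set_replicate)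
    then show ?thesis
      using extended_feature_bounds[OF assms(1), of B a] by auto
  qed
  then show ?thesis
    by (simp add: ofa_def)
qed

lemma card_extensions:
  assumes "ofa n f" "length a = length f"
  shows "card (extensions n f y a) = (length f + y) choose length f"
proof -
  let ?ys = "map2 (extend_feature (Suc n)) f a"
  have "{Suc n} \<notin> set ?ys"
    using extended_feature_bounds(1)[OF assms(1), of "{Suc n}" a] by auto
  moreover have "set (replicate y {Suc n}) \<subseteq> {{Suc n}}"
    by auto
  ultimately have disjoint: "set ?ys \<inter> set (replicate y {Suc n}) = {}"
    by blast
  have "card (extensions n f y a) = card (shuffles ?ys (replicate y {Suc n}))"
    unfolding extensions_def by (subst shuffles_commutes) (rule refl)
  also have "\<dots> = (length ?ys + length (replicate y {Suc n})) choose length ?ys"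
    using disjoint by (rule card_disjoint_shuffles)
  finally show ?thesis
    using assms(2) by simp
qed

lemma extension_event_iff:
  assumes f: "ofa n f" and a: "length a = length f" "set a \<subseteq> {0, 1}" and g: "ofa (Suc n) g"
  shows "restr n g = f \<and> new_feats n g = y \<and> (\<forall>l<length f. old_ind n g l = a ! l)
    \<longleftrightarrow> g \<in> extensions n f y a"
proof -
  define old where "old = filter (\<lambda>B. B \<inter> {1..n} \<noteq> {}) g"
  define ys where "ys = map2 (extend_feature (Suc n)) f a"
  have g_shuffle: "g \<in> shuffles (replicate (new_feats n g) {Suc n}) old"
    using partition_in_shuffles[of g "\<lambda>B. B \<inter> {1..n} = {}"] filter_new_features[OF g]
    unfolding old_def by simp
  have "old = ys \<longleftrightarrow> restr n g = f \<and> (\<forall>l<length f. old_ind n g l = a ! l)"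
    unfolding ys_def restr_eq_map_filter old_ind_def old_def[symmetric]
  proof (rule map2_extend_feature_eq_iff)
    show "\<forall>B\<in>set old. B \<subseteq> insert (Suc n) {1..n}"
      using g by (auto simp: old_def ofa_def atLeastAtMostSuc_conv)
    show "\<forall>A\<in>set f. A \<subseteq> {1..n}"
      using f by (auto simp: ofa_def)
  qed (use a in auto)
  moreover have "g \<in> extensions n f y a \<longleftrightarrow> new_feats n g = y \<and> old = ys"
  proof
    assume "g \<in> extensions n f y a"
    then have "g \<in> shuffles (replicate y {Suc n}) ys"
      by (simp add: extensions_def ys_def)
    then have "filter (\<lambda>B. B \<inter> {1..n} = {}) g = replicate y {Suc n}"
        and "filter (\<lambda>B. B \<inter> {1..n} \<noteq> {}) g = ys"
      by (rule filter_shuffles_separated; use extended_feature_bounds(1)[OF f] in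
          \<open>auto simp: ys_def\<close>)+
    then show "new_feats n g = y \<and> old = ys"
      using filter_new_features[OF g] by (simp add: old_def)
  next
    assume "new_feats n g = y \<and> old = ys"
    then show "g \<in> extensions n f y a"
      using g_shuffle by (simp add: extensions_def ys_def)
  qed
  ultimately show ?thesis
    by blast
qed

lemma mset_map_card_extensions:
  assumes f: "ofa n f" and a: "length a = length f" "set a \<subseteq> {0, 1}"
    and g: "g \<in> extensions n f y a"
  shows "mset (map card g) = mset (replicate y 1 @ map2 (+) (map card f) a)"
proof -
  have old: "map card (map2 (extend_feature (Suc n)) f a) = map2 (+) (map card f) a"
  proof (rule nth_equalityI)
    fix l assume "l < length (map card (map2 (extend_feature (Suc n)) f a))"
    then have l: "l < length f"
      using a(1) by simp
    then have "f ! l \<in> set f" "a ! l \<in> set a"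
      using a(1) by simp_all
    then have fl: "f ! l \<subseteq> {1..n}" and "a ! l \<in> {0, 1}"
      using f a(2) by (auto simp: ofa_def)
    moreover have "finite (f ! l)"
      using fl by (rule finite_subset) simp
    moreover have "Suc n \<notin> f ! l"
      using fl by auto
    ultimately have "card (extend_feature (Suc n) (f ! l) (a ! l)) = card (f ! l) + a ! l"
      by (simp add: card_extend_feature)
    then show "map card (map2 (extend_feature (Suc n)) f a) ! l = map2 (+) (map card f) a ! l"
      using l a(1) by simp
  qed (use a(1) in simp)
  have "mset g = mset (replicate y {Suc n} @ map2 (extend_feature (Suc n)) f a)"
    using g mset_shuffles unfolding extensions_def by fastforce
  then have "mset (map card g) = mset (map card (replicate y {Suc n} @ map2 (extend_feature (Suc n)) f a))"
    by (simp only: mset_map)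
  then show ?thesis
    by (simp only: map_append old) simp
qed

lemma gibbs_efpf_mset_eq:
  assumes "mset ms = mset ms'"
  shows "gibbs_efpf \<alpha> \<theta> V n ms = gibbs_efpf \<alpha> \<theta> V n ms'"
proof -
  have "prod_list (map h ms) = prod_list (map h ms')" for h :: "nat \<Rightarrow> real"
    by (metis assms mset_map prod_mset_prod_list)
  then show ?thesis
    using mset_eq_length[OF assms] by (simp add: gibbs_efpf_def)
qed

lemma gibbs_factor_Suc:
  fixes \<alpha> \<theta> :: real
  assumes "1 \<le> m" "m \<le> n" "c \<in> {0, 1}" "\<theta> + real n > 0"
  shows "pochhammer (1 - \<alpha>) (m + c - 1) * pochhammer (\<theta> + \<alpha>) (Suc n - (m + c))
    = pochhammer (1 - \<alpha>) (m - 1) * pochhammer (\<theta> + \<alpha>) (n - m)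
      * ((\<theta> + real n) * bern c ((real m - \<alpha>) / (\<theta> + real n)))"
proof (cases "c = 0")
  case True
  have idx: "m + c - 1 = m - 1" "Suc n - (m + c) = Suc (n - m)"
    using True assms(2) by auto
  have "(\<theta> + real n) * bern c ((real m - \<alpha>) / (\<theta> + real n)) = \<theta> + \<alpha> + real (n - m)"
    using True assms(2,4) by (simp add: bern_def field_simps of_nat_diff)
  then show ?thesis
    unfolding idx by (simp add: pochhammer_Suc)
next
  case False
  with assms(3) have c: "c = 1"
    by auto
  have idx: "m + c - 1 = Suc (m - 1)" "Suc n - (m + c) = n - m"
    using c assms(1,2) by auto
  have "(\<theta> + real n) * bern c ((real m - \<alpha>) / (\<theta> + real n)) = 1 - \<alpha> + real (m - 1)"
    using c assms(1,4) by (simp add: bern_def field_simps of_nat_diff)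
  then show ?thesis
    unfolding idx by (simp add: pochhammer_Suc)
qed

lemma prod_list_map_conv_nth: "prod_list (map h xs) = (\<Prod>l<length xs. h (xs ! l))"
  by (simp add: prod.list_conv_set_nth atLeast0LessThan)

lemma gibbs_efpf_Suc_extension:
  fixes \<alpha> \<theta> :: real
  assumes pos: "\<theta> + real n > 0" and ms: "\<forall>m\<in>set ms. 1 \<le> m \<and> m \<le> n"
    and a: "length a = length ms" "set a \<subseteq> {0, 1}"
  shows "gibbs_efpf \<alpha> \<theta> V (Suc n) (replicate y 1 @ map2 (+) ms a) * V n (length ms)
    = V (Suc n) (length ms + y) * pochhammer (\<theta> + \<alpha>) n ^ y * (\<theta> + real n) ^ length ms
      * (\<Prod>l<length ms. bern (a ! l) ((real (ms ! l) - \<alpha>) / (\<theta> + real n)))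
      * gibbs_efpf \<alpha> \<theta> V n ms"
proof -
  define w where "w N m = pochhammer (1 - \<alpha>) (m - 1) * pochhammer (\<theta> + \<alpha>) (N - m)" for N m
  define b where "b l = (\<theta> + real n) * bern (a ! l) ((real (ms ! l) - \<alpha>) / (\<theta> + real n))" for l
  have step: "w (Suc n) (ms ! l + a ! l) = w n (ms ! l) * b l" if "l < length ms" for l
  proof -
    have "ms ! l \<in> set ms" "a ! l \<in> set a"
      using that a(1) by simp_all
    then show ?thesis
      unfolding w_def b_def using gibbs_factor_Suc[OF _ _ _ pos] ms a(2) by blast
  qed
  have "gibbs_efpf \<alpha> \<theta> V (Suc n) (replicate y 1 @ map2 (+) ms a)
      = V (Suc n) (length ms + y) * (w (Suc n) 1 ^ y * (\<Prod>l<length ms. w (Suc n) (ms ! l + a ! l)))"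
    using a(1) by (simp add: gibbs_efpf_def w_def prod_list_map_conv_nth add.commute)
  also have "\<dots> = V (Suc n) (length ms + y) * pochhammer (\<theta> + \<alpha>) n ^ y
      * (\<Prod>l<length ms. w n (ms ! l)) * (\<Prod>l<length ms. b l)"
    using step by (simp add: w_def prod.distrib)
  moreover have "gibbs_efpf \<alpha> \<theta> V n ms = V n (length ms) * (\<Prod>l<length ms. w n (ms ! l))"
    by (simp add: gibbs_efpf_def w_def prod_list_map_conv_nth)
  moreover have "(\<Prod>l<length ms. b l) = (\<theta> + real n) ^ length ms
      * (\<Prod>l<length ms. bern (a ! l) ((real (ms ! l) - \<alpha>) / (\<theta> + real n)))"
    by (simp add: b_def prod.distrib)
  ultimately show ?thesis
    by (simp add: mult_ac)
qed

lemma ofa_card_bounds: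
  assumes "ofa n f" "B \<in> set f"
  shows "1 \<le> card B \<and> card B \<le> n"
proof -
  have "B \<noteq> {}" "B \<subseteq> {1..n}"
    using assms by (auto simp: ofa_def)
  moreover from this have "finite B"
    using finite_subset by blast
  ultimately show ?thesis
    using card_mono[of "{1..n}" B] by (simp add: Suc_le_eq card_gt_0_iff)
qed

lemma prob_restr_eq_pmf:
  assumes "gibbs_feature_model \<alpha> \<theta> V P" "n \<ge> 1"
  shows "measure_pmf.prob (P (Suc n)) {g. restr n g = f} = pmf (P n) f"
proof -
  have "measure_pmf.prob (P (Suc n)) {g. restr n g = f}
      = measure_pmf.prob (map_pmf (restr n) (P (Suc n))) {f}"
    by (simp add: vimage_def)
  also have "map_pmf (restr n) (P (Suc n)) = P n"
    using assms by (simp add: gibbs_feature_model_def)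
  finally show ?thesis
    by (simp add: measure_pmf_single)
qed

lemma prob_extension_event:
  assumes model: "gibbs_feature_model \<alpha> \<theta> V P"
    and f: "ofa n f" and a: "length a = length f" "set a \<subseteq> {0, 1}"
  shows "measure_pmf.prob (P (Suc n))
      {g. restr n g = f \<and> new_feats n g = y \<and> (\<forall>l<length f. old_ind n g l = a ! l)}
    = real ((length f + y) choose length f)
      * gibbs_efpf \<alpha> \<theta> V (Suc n) (replicate y 1 @ map2 (+) (map card f) a)"
    (is "measure_pmf.prob ?M ?S = _ * ?c")
proof -
  let ?E = "extensions n f y a"
  have support: "set_pmf ?M \<subseteq> {g. ofa (Suc n) g}"
    using model by (simp add: gibbs_feature_model_def)
  have pmf_E: "pmf ?M g = ?c" if "g \<in> ?E" for g
  proof -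
    have "pmf ?M g = gibbs_efpf \<alpha> \<theta> V (Suc n) (map card g)"
      using model ofa_extensions[OF f that] by (simp add: gibbs_feature_model_def)
    also have "\<dots> = ?c"
      by (rule gibbs_efpf_mset_eq[OF mset_map_card_extensions[OF f a that]])
    finally show ?thesis .
  qed
  have "g \<in> ?S \<longleftrightarrow> g \<in> ?E" if "g \<in> set_pmf ?M" for g
    using extension_event_iff[OF f a, of g y] support that by auto
  then have "?S \<inter> set_pmf ?M = ?E \<inter> set_pmf ?M"
    by blast
  then have "measure_pmf.prob ?M ?S = measure_pmf.prob ?M ?E"
    using measure_Int_set_pmf[of ?M ?S] measure_Int_set_pmf[of ?M ?E] by simp
  also have "\<dots> = (\<Sum>g\<in>?E. pmf ?M g)"
    by (simp add: measure_measure_pmf_finite extensions_def)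
  also have "\<dots> = real (card ?E) * ?c"
    using pmf_E by simp
  finally show ?thesis
    using card_extensions[OF f a(1)] by simp
qed

theorem theorem1:
  fixes \<alpha> \<theta> :: real and V :: "nat \<Rightarrow> nat \<Rightarrow> real" and P :: "nat \<Rightarrow> nat set list pmf"
    and n k y :: nat and f :: "nat set list" and a :: "nat list"
  assumes model: "gibbs_feature_model \<alpha> \<theta> V P"
    and n: "n \<ge> 1"
    and f: "ofa n f" and k: "length f = k"
    and pos: "pmf (P n) f > 0"
    and a: "length a = k" "set a \<subseteq> {0, 1}"
  shows "measure_pmf.prob (P (Suc n))
           {g. restr n g = f \<and> new_feats n g = y \<and> (\<forall>l<k. old_ind n g l = a ! l)}
         / measure_pmf.prob (P (Suc n)) {g. restr n g = f}
       = real ((k + y) choose k) * V (Suc n) (k + y) / V n k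
         * (pochhammer (\<theta> + \<alpha>) n) ^ y * (\<theta> + real n) ^ k
         * (\<Prod>l<k. bern (a ! l) ((real (card (f ! l)) - \<alpha>) / (\<theta> + real n)))"
proof -
  let ?G = "gibbs_efpf \<alpha> \<theta> V"
  let ?ext = "replicate y 1 @ map2 (+) (map card f) a"
  have pmf_f: "pmf (P n) f = ?G n (map card f)"
    using model n f by (simp add: gibbs_feature_model_def)
  have "\<theta> + real n > 0"
    using model n by (simp add: gibbs_feature_model_def)
  then have extension: "?G (Suc n) ?ext * V n k
      = V (Suc n) (k + y) * pochhammer (\<theta> + \<alpha>) n ^ y * (\<theta> + real n) ^ k
        * (\<Prod>l<k. bern (a ! l) ((real (card (f ! l)) - \<alpha>) / (\<theta> + real n)))
        * ?G n (map card f)"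
    using gibbs_efpf_Suc_extension[of \<theta> n "map card f" a \<alpha> V y] ofa_card_bounds[OF f] a k
    by simp
  have nonzero: "V n k \<noteq> 0" "?G n (map card f) \<noteq> 0"
    using pos pmf_f k by (auto simp: gibbs_efpf_def)
  have "measure_pmf.prob (P (Suc n))
           {g. restr n g = f \<and> new_feats n g = y \<and> (\<forall>l<k. old_ind n g l = a ! l)}
         / measure_pmf.prob (P (Suc n)) {g. restr n g = f}
      = real ((k + y) choose k) * (?G (Suc n) ?ext * V n k) / (V n k * ?G n (map card f))"
    using prob_extension_event[OF model f, of a y] prob_restr_eq_pmf[OF model n, of f]
      pmf_f nonzero a k by simp
  then show ?thesis
    unfolding extension using nonzero by (simp add: field_simps)
qed

end
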